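(* Let $\mathcal{H}$ be an LSH family on $\mathbb{R}^d$ (possibly of infinite range) with collision probability $k(x,y)=\Pr_{h\sim\mathcal{H}}[h(x)=h(y)]$, fix an integer $p\ge1$ and an integer $R\ge 2$. Let $h$ be the concatenation of $p$ independent draws from $\mathcal{H}$, let $g$ be a uniformly random function from the range of $h$ to $\{1,\dots,R\}$, independent of $h$, and set $\bar h=g\circ h$. Let $\mathcal{D}\subset\mathbb{R}^d$ with $N=|\mathcal{D}|$, and let $A$ be the array of $R$ counters with $A[j]=|\{x\in\mathcal{D}:\bar h(x)=j\}|$. For a query $q$ define $$\widehat K(q)=\left(\frac{A[\bar h(q)]}{N}-\frac1R\right)\frac{R}{R-1}.$$ Then $\mathbb{E}[\widehat K(q)]=K(q)$ and $$\operatorname{Var}(\widehat K(q))\le\left(\frac{R}{R-1}\right)^2\left(\sqrt{\frac{R-1}{R}}\,\widetilde K(q)+\frac{1}{\sqrt R}\right)^2 .$$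
   Context: Here $K(q)=\frac1N\sum_{x\in\mathcal{D}}k^p(x,q)$ and $\widetilde K(q)=\frac1N\sum_{x\in\mathcal{D}}k^{p/2}(x,q)$. Under this construction $\Pr[\bar h(x)=\bar h(q)]=k^p(x,q)\frac{R-1}{R}+\frac1R$. *)

theory Defs
  imports "HOL-Probability.Probability"
begin

definition lsh_family :: "('a \<Rightarrow> 'u) measure \<Rightarrow> bool" where
  "lsh_family H \<longleftrightarrow> prob_space H \<and>
     (\<forall>x y. {f \<in> space H. f x = f y} \<in> sets H)"

definition coll_prob :: "('a \<Rightarrow> 'u) measure \<Rightarrow> 'a \<Rightarrow> 'a \<Rightarrow> real" where
  "coll_prob H x y = measure H {f \<in> space H. f x = f y}"

definition concat_draws :: "('a \<Rightarrow> 'u) measure \<Rightarrow> nat \<Rightarrow> (nat \<Rightarrow> 'a \<Rightarrow> 'u) measure" where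
  "concat_draws H p = PiM {..<p} (\<lambda>_. H)"

definition concat_hash :: "nat \<Rightarrow> (nat \<Rightarrow> 'a \<Rightarrow> 'u) \<Rightarrow> 'a \<Rightarrow> 'u list" where
  "concat_hash p hs x = map (\<lambda>i. hs i x) [0..<p]"

definition rand_fun :: "nat \<Rightarrow> nat \<Rightarrow> ('u list \<Rightarrow> nat) measure" where
  "rand_fun p R = PiM {xs. length xs = p} (\<lambda>_. measure_pmf (pmf_of_set {1..R}))"

definition counters :: "('a \<Rightarrow> nat) \<Rightarrow> 'a set \<Rightarrow> nat \<Rightarrow> nat" where
  "counters hbar D j = card {x \<in> D. hbar x = j}"

definition K_hat :: "nat \<Rightarrow> ('a \<Rightarrow> nat) \<Rightarrow> 'a set \<Rightarrow> 'a \<Rightarrow> real" where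
  "K_hat R hbar D q =
     (real (counters hbar D (hbar q)) / real (card D) - 1 / real R) * (real R / (real R - 1))"

definition K_dens :: "('a \<Rightarrow> 'a \<Rightarrow> real) \<Rightarrow> nat \<Rightarrow> 'a set \<Rightarrow> 'a \<Rightarrow> real" where
  "K_dens k p D q = (1 / real (card D)) * (\<Sum>x\<in>D. k x q ^ p)"

definition K_tilde :: "('a \<Rightarrow> 'a \<Rightarrow> real) \<Rightarrow> nat \<Rightarrow> 'a set \<Rightarrow> 'a \<Rightarrow> real" where
  "K_tilde k p D q = (1 / real (card D)) * (\<Sum>x\<in>D. k x q powr (real p / 2))"

text \<open>Expectation over the independent pair (h, g): integrate over g for fixed h
  (g is independent of h), then over h.\<close>
definition E_hg :: "(nat \<Rightarrow> 'a \<Rightarrow> 'u) measure \<Rightarrow> ('u list \<Rightarrow> nat) measure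
     \<Rightarrow> ((nat \<Rightarrow> 'a \<Rightarrow> 'u) \<Rightarrow> ('u list \<Rightarrow> nat) \<Rightarrow> real) \<Rightarrow> real" where
  "E_hg Mh Mg X = (\<integral>hs. (\<integral>g. X hs g \<partial>Mg) \<partial>Mh)"

definition Var_hg :: "(nat \<Rightarrow> 'a \<Rightarrow> 'u) measure \<Rightarrow> ('u list \<Rightarrow> nat) measure
     \<Rightarrow> ((nat \<Rightarrow> 'a \<Rightarrow> 'u) \<Rightarrow> ('u list \<Rightarrow> nat) \<Rightarrow> real) \<Rightarrow> real" where
  "Var_hg Mh Mg X = E_hg Mh Mg (\<lambda>hs g. (X hs g - E_hg Mh Mg X)\<^sup>2)"

end

theory Submission
  imports Defs
begin

text \<open>Conditionally on the concatenated hash \<open>h\<close>, the indicator of \<open>g (h x) = g (h q)\<close>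
has mean \<open>1/R + (1 - 1/R) [h x = h q]\<close>, because \<open>g\<close> takes independent uniform values at
distinct points; averaging over \<open>h\<close> turns \<open>[h x = h q]\<close> into \<open>k(x,q)^p\<close>, so the affine
correction in \<open>K_hat\<close> makes the estimator unbiased.
A product of two such indicators has conditional mean at most
\<open>1/R + (1 - 1/R) [h x = h q = h y]\<close>, and both \<open>x\<close> and \<open>y\<close> collide with \<open>q\<close> with probability
at most \<open>sqrt (k(x,q)^p k(y,q)^p) = k(x,q)^(p/2) k(y,q)^(p/2)\<close>. Summing over pairs bounds the
second moment of the collision fraction \<open>A[hbar q] / N\<close> by \<open>1/R + (1 - 1/R) K_tilde^2\<close>.\<close>

lemma integral_uniform_fun_collision:
  fixes I :: "'i set" and R :: nat
  assumes "u \<in> I" "w \<in> I" "R \<ge> 1"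
  shows "(\<integral>g. of_bool (g u = g w) \<partial>(\<Pi>\<^sub>M i\<in>I. measure_pmf (pmf_of_set {1..R})))
           = 1 / real R + (1 - 1 / real R) * of_bool (u = w)"
proof -
  define M where "M = (\<Pi>\<^sub>M i\<in>I. measure_pmf (pmf_of_set {1..R}))"
  interpret product_prob_space "\<lambda>_. measure_pmf (pmf_of_set {1..R})" I
    by unfold_locales
  have R_ne: "{1..R} \<noteq> {}" using assms by simp
  show ?thesis
  proof (cases "u = w")
    case True
    then show ?thesis using P.prob_space by simp
  next
    case False
    \<comment> \<open>\<open>M\<close> lives on all functions \<open>I \<Rightarrow> nat\<close>, so \<open>g u \<in> {1..R}\<close> holds only almost surely.\<close>
    have "AE g in M. g u \<in> {1..R}"
      unfolding M_def using assms R_ne by (intro AE_component) (auto simp: AE_measure_pmf_iff)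
    then have indicator_as_sum: "AE g in M. of_bool (g u = g w) = (\<Sum>a\<in>{1..R}. of_bool (g u = a \<and> g w = a) :: real)"
      by eventually_elim (auto simp: of_bool_def sum.If_cases)
    have meas_pair: "(\<lambda>g. of_bool (g u = a \<and> g w = a) :: real) \<in> borel_measurable M" for a
      unfolding M_def using assms by measurable
    have meas_eq: "(\<lambda>g. of_bool (g u = g w) :: real) \<in> borel_measurable M"
      unfolding M_def using assms by measurable
    have pair: "(\<integral>g. of_bool (g u = a \<and> g w = a) \<partial>M) = 1 / real R ^ 2" if "a \<in> {1..R}" for a
    proof -
      let ?S = "{g \<in> space M. g u = a \<and> g w = a}"
      have "emeasure M ?S = ennreal (1 / real R ^ 2)"
        unfolding M_def using emeasure_PiM_Collect[of "{u, w}" "\<lambda>_. {a}"] assms False that R_ne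
        by (simp add: measure_pmf.emeasure_eq_measure measure_pmf_of_set ennreal_mult'[symmetric]
            power2_eq_square)
      then have measure_S: "measure M ?S = 1 / real R ^ 2"
        by (intro measure_eq_emeasure_eq_ennreal) simp_all
      have "(\<integral>g. of_bool (g u = a \<and> g w = a) \<partial>M) = (\<integral>g. indicator ?S g \<partial>M)"
        by (intro Bochner_Integration.integral_cong) (auto simp: indicator_def)
      also have "\<dots> = measure M (?S \<inter> space M)"
        by (rule Bochner_Integration.integral_indicator)
      also have "?S \<inter> space M = ?S"
        by blast
      finally show ?thesis
        by (simp only: measure_S)
    qed
    have "(\<integral>g. of_bool (g u = g w) \<partial>M) = (\<integral>g. (\<Sum>a\<in>{1..R}. of_bool (g u = a \<and> g w = a)) \<partial>M :: real)"
      using indicator_as_sum by (intro integral_cong_AE borel_measurable_sum meas_pair meas_eq)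
    also have "\<dots> = (\<Sum>a\<in>{1..R}. 1 / real R ^ 2)"
    proof (subst Bochner_Integration.integral_sum)
      show "integrable M (\<lambda>g. of_bool (g u = a \<and> g w = a) :: real)" for a
        using meas_pair[of a] unfolding M_def by (intro P.integrable_const_bound[where B = 1]) auto
    qed (simp add: pair)
    also have "\<dots> = 1 / real R" by (simp add: power2_eq_square)
    finally show ?thesis using False by (simp add: M_def)
  qed
qed

lemma E_hg_affine:
  assumes "prob_space Mh" "prob_space Mg"
    and "\<And>hs. integrable Mg (Z hs)" and "integrable Mh (\<lambda>hs. \<integral>g. Z hs g \<partial>Mg)"
  shows "E_hg Mh Mg (\<lambda>hs g. a * Z hs g + b) = a * E_hg Mh Mg Z + b"
proof -
  interpret Mh: prob_space Mh by fact
  interpret Mg: prob_space Mg by fact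
  have "(\<integral>g. a * Z hs g + b \<partial>Mg) = a * (\<integral>g. Z hs g \<partial>Mg) + b" for hs
    using assms(3) by (simp add: Mg.prob_space)
  then show ?thesis
    using assms(4) by (simp add: E_hg_def Mh.prob_space)
qed

lemma Var_hg_affine:
  assumes "prob_space Mh" "prob_space Mg"
    and "\<And>hs. integrable Mg (Z hs)" and "integrable Mh (\<lambda>hs. \<integral>g. Z hs g \<partial>Mg)"
  shows "Var_hg Mh Mg (\<lambda>hs g. a * Z hs g + b) = a\<^sup>2 * Var_hg Mh Mg Z"
proof -
  have "(a * Z hs g + b - (a * E_hg Mh Mg Z + b))\<^sup>2 = a\<^sup>2 * (Z hs g - E_hg Mh Mg Z)\<^sup>2" for hs g
    by (simp add: power2_eq_square algebra_simps)
  then show ?thesis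
    unfolding Var_hg_def E_hg_affine[OF assms] by (simp add: E_hg_def)
qed

lemma Var_hg_le:
  assumes "prob_space Mh" "prob_space Mg"
    and "\<And>hs. integrable Mg (Z hs)" and "\<And>hs. integrable Mg (\<lambda>g. (Z hs g)\<^sup>2)"
    and "integrable Mh (\<lambda>hs. \<integral>g. Z hs g \<partial>Mg)"
    and "\<And>hs. hs \<in> space Mh \<Longrightarrow> (\<integral>g. (Z hs g)\<^sup>2 \<partial>Mg) \<le> B hs" and "integrable Mh B"
  shows "Var_hg Mh Mg Z \<le> (\<integral>hs. B hs \<partial>Mh) - (E_hg Mh Mg Z)\<^sup>2"
proof -
  interpret Mh: prob_space Mh by fact
  interpret Mg: prob_space Mg by fact
  define \<mu> where "\<mu> = E_hg Mh Mg Z"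
  have inner: "(\<integral>g. (Z hs g - \<mu>)\<^sup>2 \<partial>Mg) = (\<integral>g. (Z hs g)\<^sup>2 \<partial>Mg) - 2 * \<mu> * (\<integral>g. Z hs g \<partial>Mg) + \<mu>\<^sup>2"
    for hs
  proof -
    have "(Z hs g - \<mu>)\<^sup>2 = (Z hs g)\<^sup>2 - 2 * \<mu> * Z hs g + \<mu>\<^sup>2" for g
      by (simp add: power2_diff)
    then show ?thesis using assms(3,4) by (simp add: Mg.prob_space)
  qed
  have "Var_hg Mh Mg Z = (\<integral>hs. (\<integral>g. (Z hs g - \<mu>)\<^sup>2 \<partial>Mg) \<partial>Mh)"
    by (simp add: Var_hg_def E_hg_def \<mu>_def)
  also have "\<dots> \<le> (\<integral>hs. B hs - 2 * \<mu> * (\<integral>g. Z hs g \<partial>Mg) + \<mu>\<^sup>2 \<partial>Mh)"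
  proof (rule integral_mono')
    show "integrable Mh (\<lambda>hs. B hs - 2 * \<mu> * (\<integral>g. Z hs g \<partial>Mg) + \<mu>\<^sup>2)"
      using assms(5,7) by simp
    show "(\<integral>g. (Z hs g - \<mu>)\<^sup>2 \<partial>Mg) \<le> B hs - 2 * \<mu> * (\<integral>g. Z hs g \<partial>Mg) + \<mu>\<^sup>2"
      if "hs \<in> space Mh" for hs
      using assms(6)[OF that] by (simp add: inner)
    moreover have "0 \<le> (\<integral>g. (Z hs g - \<mu>)\<^sup>2 \<partial>Mg)" for hs
      by simp
    ultimately show "0 \<le> B hs - 2 * \<mu> * (\<integral>g. Z hs g \<partial>Mg) + \<mu>\<^sup>2" if "hs \<in> space Mh" for hs
      using that order_trans by blast
  qed
  also have "\<dots> = (\<integral>hs. B hs \<partial>Mh) - \<mu>\<^sup>2"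
    using assms(5,7) by (simp add: Mh.prob_space \<mu>_def E_hg_def power2_eq_square)
  finally show ?thesis unfolding \<mu>_def .
qed

lemma prob_space_concat_draws: "lsh_family H \<Longrightarrow> prob_space (concat_draws H p)"
  unfolding concat_draws_def lsh_family_def by (simp add: prob_space_PiM)

lemma prob_space_rand_fun: "prob_space (rand_fun p R)"
  unfolding rand_fun_def by (simp add: prob_space_PiM prob_space_measure_pmf)

lemma concat_collision_eq:
  "{hs \<in> space (concat_draws H p). concat_hash p hs x = concat_hash p hs y} =
   {hs \<in> space (concat_draws H p). \<forall>i\<in>{..<p}. hs i \<in> {f \<in> space H. f x = f y}}"
  unfolding concat_hash_def concat_draws_def by (auto simp: space_PiM PiE_iff map_eq_conv)

lemma
  assumes "lsh_family H"
  shows sets_concat_collision: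
      "{hs \<in> space (concat_draws H p). concat_hash p hs x = concat_hash p hs y} \<in> sets (concat_draws H p)"
    and measure_concat_collision:
      "measure (concat_draws H p) {hs \<in> space (concat_draws H p). concat_hash p hs x = concat_hash p hs y}
         = coll_prob H x y ^ p"
proof -
  interpret H: prob_space H using assms by (simp add: lsh_family_def)
  interpret product_prob_space "\<lambda>_. H" "{..<p}" by unfold_locales
  have coll: "{f \<in> space H. f x = f y} \<in> sets H" using assms by (simp add: lsh_family_def)
  then show "{hs \<in> space (concat_draws H p). concat_hash p hs x = concat_hash p hs y} \<in> sets (concat_draws H p)"
    unfolding concat_collision_eq unfolding concat_draws_def
    by (intro sets.sets_Collect_finite_All sets_Collect_single') auto
  have "emeasure (concat_draws H p) {hs \<in> space (concat_draws H p). concat_hash p hs x = concat_hash p hs y}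
          = ennreal (coll_prob H x y ^ p)"
    unfolding concat_collision_eq unfolding concat_draws_def
    using emeasure_PiM_Collect[of "{..<p}" "\<lambda>_. {f \<in> space H. f x = f y}"] coll
    by (simp add: H.emeasure_eq_measure coll_prob_def prod_ennreal ennreal_power)
  then show "measure (concat_draws H p) {hs \<in> space (concat_draws H p). concat_hash p hs x = concat_hash p hs y}
               = coll_prob H x y ^ p"
    by (simp add: measure_def coll_prob_def)
qed

lemma (in finite_measure) measure_Int_le_sqrt_mult:
  assumes "A \<in> sets M" "B \<in> sets M"
  shows "measure M (A \<inter> B) \<le> sqrt (measure M A) * sqrt (measure M B)"
proof -
  have "measure M (A \<inter> B) = sqrt (measure M (A \<inter> B)) * sqrt (measure M (A \<inter> B))"
    by simp
  also have "\<dots> \<le> sqrt (measure M A) * sqrt (measure M B)"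
    using assms by (intro mult_mono real_sqrt_le_mono finite_measure_mono) auto
  finally show ?thesis .
qed

lemma powr_half_eq_sqrt_power:
  fixes a :: real
  assumes "0 \<le> a" "n > 0"
  shows "a powr (real n / 2) = sqrt (a ^ n)"
proof (cases "a = 0")
  case False
  then have "a powr (real n / 2) = (a powr real n) powr (1 / 2)"
    by (simp add: powr_powr)
  then show ?thesis
    using assms False by (simp add: powr_half_sqrt powr_realpow)
qed (use assms in simp)

lemma mixture_le_sqrt_sum_square:
  fixes r K :: real
  assumes "r \<ge> 1" "K \<ge> 0"
  shows "1 / r + (1 - 1 / r) * K\<^sup>2 \<le> (sqrt ((r - 1) / r) * K + 1 / sqrt r)\<^sup>2"
proof -
  have "(sqrt ((r - 1) / r) * K)\<^sup>2 = (1 - 1 / r) * K\<^sup>2" and "(1 / sqrt r)\<^sup>2 = 1 / r"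
    using assms by (simp_all add: power_mult_distrib power_divide diff_divide_distrib)
  moreover have "0 \<le> 2 * (sqrt ((r - 1) / r) * K) * (1 / sqrt r)"
    using assms by simp
  ultimately show ?thesis
    unfolding power2_sum by linarith
qed

locale lsh_sketch =
  fixes H :: "('a \<Rightarrow> 'u) measure" and p R :: nat and D :: "'a set" and q :: 'a
  assumes lsh: "lsh_family H" and p_pos: "p \<ge> 1" and R_ge_2: "R \<ge> 2"
    and finite_D: "finite D" and D_ne: "D \<noteq> {}"
begin

abbreviation "Mh \<equiv> concat_draws H p"
abbreviation "Mg \<equiv> rand_fun p R"
abbreviation "N \<equiv> real (card D)"

sublocale Mh: prob_space Mh
  by (rule prob_space_concat_draws[OF lsh])

sublocale Mg: prob_space Mg
  by (rule prob_space_rand_fun)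

definition coll_event :: "'a \<Rightarrow> (nat \<Rightarrow> 'a \<Rightarrow> 'u) set" where
  "coll_event x = {hs \<in> space Mh. concat_hash p hs x = concat_hash p hs q}"

definition coll_fraction :: "(nat \<Rightarrow> 'a \<Rightarrow> 'u) \<Rightarrow> ('u list \<Rightarrow> nat) \<Rightarrow> real" where
  "coll_fraction hs g = real (counters (g \<circ> concat_hash p hs) D (g (concat_hash p hs q))) / N"

abbreviation coll_indicator :: "(nat \<Rightarrow> 'a \<Rightarrow> 'u) \<Rightarrow> ('u list \<Rightarrow> nat) \<Rightarrow> 'a \<Rightarrow> real" where
  "coll_indicator hs g x \<equiv> of_bool (g (concat_hash p hs x) = g (concat_hash p hs q))"

abbreviation joint_coll :: "(nat \<Rightarrow> 'a \<Rightarrow> 'u) \<Rightarrow> 'a \<Rightarrow> 'a \<Rightarrow> real" where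
  "joint_coll hs x y \<equiv>
     of_bool (concat_hash p hs x = concat_hash p hs q \<and> concat_hash p hs y = concat_hash p hs q)"

lemma N_pos: "N > 0"
  using finite_D D_ne by (simp add: card_gt_0_iff)

lemma K_hat_eq_affine:
  "K_hat R (g \<circ> concat_hash p hs) D q = real R / (real R - 1) * coll_fraction hs g + - 1 / (real R - 1)"
proof -
  have "(a - 1 / real R) * (real R / (real R - 1)) = real R / (real R - 1) * a + - 1 / (real R - 1)" for a
    using R_ge_2 by (simp add: diff_divide_distrib[symmetric] divide_simps)
  then show ?thesis
    by (simp add: K_hat_def coll_fraction_def)
qed

lemma coll_fraction_eq_sum: "coll_fraction hs = (\<lambda>g. (\<Sum>x\<in>D. coll_indicator hs g x) / N)"
  using finite_D by (auto simp: coll_fraction_def counters_def Collect_conj_eq Int_commute)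

lemma borel_measurable_coll_indicator: "(\<lambda>g. coll_indicator hs g x) \<in> borel_measurable Mg"
  unfolding rand_fun_def by measurable (simp_all add: concat_hash_def)

lemma integrable_coll_indicator: "integrable Mg (\<lambda>g. coll_indicator hs g x)"
  by (intro Mg.integrable_const_bound[where B = 1] borel_measurable_coll_indicator) simp

lemma integrable_coll_indicator_mult: "integrable Mg (\<lambda>g. coll_indicator hs g x * coll_indicator hs g y)"
  by (intro Mg.integrable_const_bound[where B = 1] borel_measurable_times borel_measurable_coll_indicator) simp

lemma integral_coll_indicator:
  "(\<integral>g. coll_indicator hs g x \<partial>Mg) = 1 / real R + (1 - 1 / real R) * of_bool (concat_hash p hs x = concat_hash p hs q)"
  unfolding rand_fun_def using R_ge_2
  by (intro integral_uniform_fun_collision) (simp_all add: concat_hash_def)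

lemma integral_coll_indicator_mult_le:
  "(\<integral>g. coll_indicator hs g x * coll_indicator hs g y \<partial>Mg)
     \<le> 1 / real R + (1 - 1 / real R) * joint_coll hs x y"
proof -
  have "(\<integral>g. coll_indicator hs g x * coll_indicator hs g y \<partial>Mg) \<le> (\<integral>g. coll_indicator hs g x \<partial>Mg)"
    and "(\<integral>g. coll_indicator hs g x * coll_indicator hs g y \<partial>Mg) \<le> (\<integral>g. coll_indicator hs g y \<partial>Mg)"
    by (intro integral_mono integrable_coll_indicator_mult integrable_coll_indicator; simp)+
  then show ?thesis
    using R_ge_2 by (auto simp: integral_coll_indicator)
qed

lemma coll_event_sets: "coll_event x \<in> sets Mh"
  unfolding coll_event_def by (rule sets_concat_collision[OF lsh])

lemma measure_coll_event: "measure Mh (coll_event x) = coll_prob H x q ^ p"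
  unfolding coll_event_def by (rule measure_concat_collision[OF lsh])

lemma measure_coll_event_Int_le:
  "measure Mh (coll_event x \<inter> coll_event y)
     \<le> coll_prob H x q powr (real p / 2) * coll_prob H y q powr (real p / 2)"
proof -
  have "0 \<le> coll_prob H z q" for z
    by (simp add: coll_prob_def)
  then have "coll_prob H z q powr (real p / 2) = sqrt (measure Mh (coll_event z))" for z
    using p_pos by (simp add: powr_half_eq_sqrt_power measure_coll_event)
  then show ?thesis
    using coll_event_sets by (simp add: Mh.measure_Int_le_sqrt_mult)
qed

lemma joint_coll_eq_indicator:
  "hs \<in> space Mh \<Longrightarrow> joint_coll hs x y = indicator (coll_event x \<inter> coll_event y) hs"
  by (simp add: coll_event_def indicator_def)

lemma integrable_joint_coll: "integrable Mh (\<lambda>hs. joint_coll hs x y)"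
  using coll_event_sets
  by (subst Bochner_Integration.integrable_cong[OF refl joint_coll_eq_indicator])
     (auto simp: Mh.emeasure_eq_measure)

lemma integral_joint_coll: "(\<integral>hs. joint_coll hs x y \<partial>Mh) = measure Mh (coll_event x \<inter> coll_event y)"
  using coll_event_sets
  by (subst Bochner_Integration.integral_cong[OF refl joint_coll_eq_indicator]) auto

lemma coll_fraction_sq_eq:
  "(coll_fraction hs g)\<^sup>2 = (\<Sum>x\<in>D. \<Sum>y\<in>D. coll_indicator hs g x * coll_indicator hs g y) / N\<^sup>2"
  by (simp add: coll_fraction_eq_sum power_divide power2_eq_square sum_product)

lemma integrable_coll_fraction: "integrable Mg (coll_fraction hs)"
  by (simp add: coll_fraction_eq_sum integrable_coll_indicator)

lemma integrable_coll_fraction_sq: "integrable Mg (\<lambda>g. (coll_fraction hs g)\<^sup>2)"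
  by (simp add: coll_fraction_sq_eq integrable_coll_indicator_mult)

lemma integral_coll_fraction:
  "(\<integral>g. coll_fraction hs g \<partial>Mg)
     = 1 / real R + (1 - 1 / real R) * (\<Sum>x\<in>D. of_bool (concat_hash p hs x = concat_hash p hs q)) / N"
  using N_pos
  by (simp add: coll_fraction_eq_sum integrable_coll_indicator integral_coll_indicator
      sum.distrib sum_distrib_left add_divide_distrib)

lemma integral_coll_fraction_sq_le:
  "(\<integral>g. (coll_fraction hs g)\<^sup>2 \<partial>Mg) \<le> 1 / real R + (1 - 1 / real R) * (\<Sum>x\<in>D. \<Sum>y\<in>D. joint_coll hs x y) / N\<^sup>2"
proof -
  have "(\<integral>g. (coll_fraction hs g)\<^sup>2 \<partial>Mg)
          = (\<Sum>x\<in>D. \<Sum>y\<in>D. \<integral>g. coll_indicator hs g x * coll_indicator hs g y \<partial>Mg) / N\<^sup>2"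
    by (simp add: coll_fraction_sq_eq integrable_coll_indicator_mult)
  also have "\<dots> \<le> (\<Sum>x\<in>D. \<Sum>y\<in>D. 1 / real R + (1 - 1 / real R) * joint_coll hs x y) / N\<^sup>2"
    by (intro divide_right_mono sum_mono integral_coll_indicator_mult_le) simp
  also have "\<dots> = 1 / real R + (1 - 1 / real R) * (\<Sum>x\<in>D. \<Sum>y\<in>D. joint_coll hs x y) / N\<^sup>2"
    using N_pos by (simp add: sum.distrib sum_distrib_left add_divide_distrib power2_eq_square)
  finally show ?thesis .
qed

lemma integrable_coll: "integrable Mh (\<lambda>hs. of_bool (concat_hash p hs x = concat_hash p hs q) :: real)"
  using integrable_joint_coll[of x x] by simp

lemma integral_coll: "(\<integral>hs. of_bool (concat_hash p hs x = concat_hash p hs q) \<partial>Mh) = coll_prob H x q ^ p"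
  using integral_joint_coll[of x x] by (simp add: measure_coll_event)

lemma E_coll_fraction:
  "E_hg Mh Mg coll_fraction = 1 / real R + (1 - 1 / real R) * K_dens (coll_prob H) p D q"
  unfolding E_hg_def integral_coll_fraction
  by (simp add: integrable_coll integral_coll K_dens_def Mh.prob_space)

lemma integrable_integral_coll_fraction: "integrable Mh (\<lambda>hs. \<integral>g. coll_fraction hs g \<partial>Mg)"
  unfolding integral_coll_fraction by (simp add: integrable_coll)

lemma Var_coll_fraction_le:
  "Var_hg Mh Mg coll_fraction \<le> 1 / real R + (1 - 1 / real R) * (K_tilde (coll_prob H) p D q)\<^sup>2"
proof -
  define s where "s x = coll_prob H x q powr (real p / 2)" for x
  define B where "B hs = 1 / real R + (1 - 1 / real R) * (\<Sum>x\<in>D. \<Sum>y\<in>D. joint_coll hs x y) / N\<^sup>2" for hs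
  have "Var_hg Mh Mg coll_fraction \<le> (\<integral>hs. B hs \<partial>Mh) - (E_hg Mh Mg coll_fraction)\<^sup>2"
    using integrable_coll_fraction integrable_coll_fraction_sq integrable_integral_coll_fraction
      integral_coll_fraction_sq_le
    by (intro Var_hg_le) (simp_all add: B_def integrable_joint_coll Mh.prob_space_axioms Mg.prob_space_axioms)
  also have "\<dots> \<le> (\<integral>hs. B hs \<partial>Mh)"
    by simp
  also have "\<dots> = 1 / real R + (1 - 1 / real R) * (\<Sum>x\<in>D. \<Sum>y\<in>D. measure Mh (coll_event x \<inter> coll_event y)) / N\<^sup>2"
    by (simp add: B_def integrable_joint_coll integral_joint_coll Mh.prob_space)
  also have "\<dots> \<le> 1 / real R + (1 - 1 / real R) * (\<Sum>x\<in>D. \<Sum>y\<in>D. s x * s y) / N\<^sup>2"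
    using R_ge_2 unfolding s_def
    by (intro add_left_mono mult_left_mono divide_right_mono sum_mono measure_coll_event_Int_le) simp_all
  also have "\<dots> = 1 / real R + (1 - 1 / real R) * (K_tilde (coll_prob H) p D q)\<^sup>2"
    by (simp add: K_tilde_def s_def power2_eq_square sum_product power_divide)
  finally show ?thesis .
qed

lemma E_K_hat: "E_hg Mh Mg (\<lambda>hs g. K_hat R (g \<circ> concat_hash p hs) D q) = K_dens (coll_prob H) p D q"
proof -
  have "real R / (real R - 1) * (1 / real R + (1 - 1 / real R) * k) + - 1 / (real R - 1) = k" for k
    using R_ge_2 by (simp add: divide_simps)
  then show ?thesis
    unfolding K_hat_eq_affine E_coll_fraction
      E_hg_affine[OF Mh.prob_space_axioms Mg.prob_space_axioms integrable_coll_fraction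
        integrable_integral_coll_fraction] .
qed

lemma Var_K_hat_le:
  "Var_hg Mh Mg (\<lambda>hs g. K_hat R (g \<circ> concat_hash p hs) D q)
     \<le> (real R / (real R - 1))\<^sup>2 *
       (sqrt ((real R - 1) / real R) * K_tilde (coll_prob H) p D q + 1 / sqrt (real R))\<^sup>2"
proof -
  have "0 \<le> K_tilde (coll_prob H) p D q"
    by (simp add: K_tilde_def sum_nonneg)
  then have "1 / real R + (1 - 1 / real R) * (K_tilde (coll_prob H) p D q)\<^sup>2
               \<le> (sqrt ((real R - 1) / real R) * K_tilde (coll_prob H) p D q + 1 / sqrt (real R))\<^sup>2"
    using R_ge_2 by (intro mixture_le_sqrt_sum_square) simp_all
  with Var_coll_fraction_le show ?thesis
    unfolding K_hat_eq_affine
      Var_hg_affine[OF Mh.prob_space_axioms Mg.prob_space_axioms integrable_coll_fraction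
        integrable_integral_coll_fraction]
    by (intro mult_left_mono) simp_all
qed

end

theorem mainTheorem2:
  fixes H :: "(real ^ 'd \<Rightarrow> 'u) measure"
    and p R :: nat
    and D :: "(real ^ 'd) set"
    and q :: "real ^ 'd"
  assumes "lsh_family H"
    and "p \<ge> 1" and "R \<ge> 2"
    and "finite D" and "D \<noteq> {}"
  shows "E_hg (concat_draws H p) (rand_fun p R)
           (\<lambda>hs g. K_hat R (g \<circ> concat_hash p hs) D q)
         = K_dens (coll_prob H) p D q
         \<and> Var_hg (concat_draws H p) (rand_fun p R)
           (\<lambda>hs g. K_hat R (g \<circ> concat_hash p hs) D q)
         \<le> (real R / (real R - 1))\<^sup>2 *
           (sqrt ((real R - 1) / real R) * K_tilde (coll_prob H) p D q + 1 / sqrt (real R))\<^sup>2"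
proof -
  interpret lsh_sketch H p R D q
    using assms by unfold_locales
  show ?thesis
    using E_K_hat Var_K_hat_le by simp
qed

end
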